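(* For $p$ an odd prime, $H(p-1)\equiv (-1)^{\frac{p-1}{2}}\,(p-1)!! \pmod p$.
   Context: For a natural number $n$, the double factorial $n!!$ is the product of the natural numbers less than or equal to $n$ that have the same parity as $n$. The hyperfactorial is $H(n)=\prod_{k=1}^{n} k^k$. *)

theory Defs
  imports "HOL-Number_Theory.Number_Theory"
begin

definition double_fact :: "nat \<Rightarrow> nat" where
  "double_fact n = (\<Prod>k\<in>{k\<in>{1..n}. even k = even n}. k)"

definition hyperfact :: "nat \<Rightarrow> nat" where
  "hyperfact n = (\<Prod>k=1..n. k ^ k)"

end

theory Submission
  imports Defs
begin

text \<open>Pair each odd \<open>k < p\<close> with the even number \<open>p - k\<close>. Since \<open>p - k \<equiv> -k\<close> and \<open>p - k\<close> is even,
  \<open>k\<^sup>k (p - k)\<^bsup>p - k\<^esup> \<equiv> k\<^sup>p \<equiv> k (mod p)\<close> by Fermat, so \<open>H(p - 1)\<close> is congruent to the product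
  of the odd numbers below \<open>p\<close>. The same pairing turns \<open>(p - 1)!!\<close>, the product of the even numbers,
  into \<open>(-1)\<^bsup>(p-1)/2\<^esup>\<close> times that product; as \<open>((-1)\<^bsup>(p-1)/2\<^esup>)\<^sup>2 = 1\<close> the two congruences combine.\<close>

lemma fermat_theorem_int:
  fixes p k :: nat
  assumes "prime p"
  shows "[int k ^ p = int k] (mod int p)"
proof (cases "p dvd k")
  case True
  then have "[int k = 0] (mod int p)"
    by (simp add: cong_0_iff)
  then show ?thesis
    using prime_gt_0_nat[OF assms] by (metis cong_pow cong_sym cong_trans power_0_left neq0_conv)
next
  case False
  have "[k ^ (p - 1) = 1] (mod p)"
    by (rule fermat_theorem[OF assms False])
  then have "[int k ^ (p - 1) = 1] (mod int p)"
    by (metis cong_int_iff of_nat_1 of_nat_power)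
  then have "[int k * int k ^ (p - 1) = int k * 1] (mod int p)"
    by (rule cong_mult[OF cong_refl])
  moreover have "int k * int k ^ (p - 1) = int k ^ p"
    using prime_gt_0_nat[OF assms] by (simp flip: power_Suc)
  ultimately show ?thesis
    by simp
qed

lemma reflect_cong_neg:
  fixes p k :: nat
  assumes "k \<le> p"
  shows "[int (p - k) = - int k] (mod int p)"
  using assms by (simp add: cong_iff_dvd_diff)

lemma self_power_pair_cong:
  fixes p k :: nat
  assumes "prime p" and "k \<le> p" and "even (p - k)"
  shows "[int k ^ k * int (p - k) ^ (p - k) = int k] (mod int p)"
proof -
  have "[int (p - k) ^ (p - k) = (- int k) ^ (p - k)] (mod int p)"
    by (rule cong_pow[OF reflect_cong_neg[OF assms(2)]])
  then have "[int k ^ k * int (p - k) ^ (p - k) = int k ^ k * int k ^ (p - k)] (mod int p)"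
    using assms(3) by (simp add: cong_mult[OF cong_refl])
  also have "int k ^ k * int k ^ (p - k) = int k ^ p"
    using assms(2) by (simp flip: power_add)
  also have "[int k ^ p = int k] (mod int p)"
    by (rule fermat_theorem_int[OF assms(1)])
  finally show ?thesis .
qed

lemma bij_betw_reflect_odd_even:
  fixes n :: nat
  assumes "odd n"
  shows "bij_betw (\<lambda>k. n - k) {k\<in>{1..n-1}. odd k} {k\<in>{1..n-1}. even k}"
proof (rule bij_betw_imageI)
  show "inj_on (\<lambda>k. n - k) {k\<in>{1..n-1}. odd k}"
    by (auto simp: inj_on_def)
  show "(\<lambda>k. n - k) ` {k\<in>{1..n-1}. odd k} = {k\<in>{1..n-1}. even k}"
  proof
    show "(\<lambda>k. n - k) ` {k\<in>{1..n-1}. odd k} \<subseteq> {k\<in>{1..n-1}. even k}"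
      using assms by auto
    show "{k\<in>{1..n-1}. even k} \<subseteq> (\<lambda>k. n - k) ` {k\<in>{1..n-1}. odd k}"
    proof
      fix k assume "k \<in> {k\<in>{1..n-1}. even k}"
      then have "n - k \<in> {k\<in>{1..n-1}. odd k}" and "k = n - (n - k)"
        using assms by auto
      then show "k \<in> (\<lambda>k. n - k) ` {k\<in>{1..n-1}. odd k}"
        by blast
    qed
  qed
qed

lemma card_odd_below_odd:
  fixes n :: nat
  assumes "odd n"
  shows "card {k\<in>{1..n-1}. odd k} = (n - 1) div 2"
proof -
  let ?O = "{k\<in>{1..n-1}. odd k}" and ?E = "{k\<in>{1..n-1}. even k}"
  have "n - 1 = card {1..n-1}"
    by simp
  also have "{1..n-1} = ?O \<union> ?E"
    by auto
  also have "card (?O \<union> ?E) = card ?O + card ?E"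
    by (rule card_Un_disjoint) auto
  also have "card ?E = card ?O"
    using bij_betw_same_card[OF bij_betw_reflect_odd_even[OF assms]] by simp
  finally show ?thesis
    by simp
qed

lemma hyperfact_pred_cong_prod_odd:
  fixes p :: nat
  assumes "prime p" and "odd p"
  shows "[int (hyperfact (p - 1)) = (\<Prod>k\<in>{k\<in>{1..p-1}. odd k}. int k)] (mod int p)"
proof -
  let ?O = "{k\<in>{1..p-1}. odd k}" and ?E = "{k\<in>{1..p-1}. even k}"
  have "int (hyperfact (p - 1)) = (\<Prod>k\<in>{1..p-1}. int k ^ k)"
    by (simp add: hyperfact_def)
  also have "{1..p-1} = ?O \<union> ?E"
    by auto
  also have "(\<Prod>k\<in>?O \<union> ?E. int k ^ k) = (\<Prod>k\<in>?O. int k ^ k) * (\<Prod>k\<in>?E. int k ^ k)"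
    by (rule prod.union_disjoint) auto
  also have "(\<Prod>k\<in>?E. int k ^ k) = (\<Prod>k\<in>?O. int (p - k) ^ (p - k))"
    by (rule prod.reindex_bij_betw[OF bij_betw_reflect_odd_even[OF assms(2)], symmetric])
  also have "(\<Prod>k\<in>?O. int k ^ k) * \<dots> = (\<Prod>k\<in>?O. int k ^ k * int (p - k) ^ (p - k))"
    by (simp add: prod.distrib)
  also have "[\<dots> = (\<Prod>k\<in>?O. int k)] (mod int p)"
    using assms by (intro cong_prod self_power_pair_cong) auto
  finally show ?thesis .
qed

lemma double_fact_pred_cong_prod_odd:
  fixes n :: nat
  assumes "odd n"
  shows "[int (double_fact (n - 1)) = (-1) ^ ((n - 1) div 2) * (\<Prod>k\<in>{k\<in>{1..n-1}. odd k}. int k)]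
    (mod int n)"
proof -
  let ?O = "{k\<in>{1..n-1}. odd k}"
  have "double_fact (n - 1) = (\<Prod>k\<in>{k\<in>{1..n-1}. even k}. k)"
    unfolding double_fact_def using assms by (intro prod.cong) auto
  also have "\<dots> = (\<Prod>k\<in>?O. n - k)"
    by (rule prod.reindex_bij_betw[OF bij_betw_reflect_odd_even[OF assms], symmetric])
  finally have "int (double_fact (n - 1)) = (\<Prod>k\<in>?O. int (n - k))"
    by simp
  also have "[\<dots> = (\<Prod>k\<in>?O. - int k)] (mod int n)"
    by (intro cong_prod reflect_cong_neg) auto
  also have "(\<Prod>k\<in>?O. - int k) = (-1) ^ ((n - 1) div 2) * (\<Prod>k\<in>?O. int k)"
    using card_odd_below_odd[OF assms] by (simp add: prod_uminus)
  finally show ?thesis .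
qed

theorem theorem11:
  fixes p :: nat
  assumes "prime p" and "odd p"
  shows "[int (hyperfact (p - 1)) = (-1) ^ ((p - 1) div 2) * int (double_fact (p - 1))] (mod int p)"
proof -
  let ?s = "(-1 :: int) ^ ((p - 1) div 2)" and ?P = "\<Prod>k\<in>{k\<in>{1..p-1}. odd k}. int k"
  have "[?s * int (double_fact (p - 1)) = ?s * (?s * ?P)] (mod int p)"
    by (rule cong_mult[OF cong_refl double_fact_pred_cong_prod_odd[OF assms(2)]])
  also have "?s * (?s * ?P) = ?P"
    by (simp flip: mult.assoc power_add)
  finally have "[?s * int (double_fact (p - 1)) = ?P] (mod int p)" .
  with hyperfact_pred_cong_prod_odd[OF assms] show ?thesis
    by (rule cong_trans[OF _ cong_sym])
qed

end
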